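(* Fix $c\in(0,1)$ and let $S:=[-1,-c)\cup(c,1]$. For $f\in L^1_{\mathrm{loc}}(\mathbb{R})$ let $$h(\gamma)=Kf(\gamma):=\int_{\mathbb{R}} f(t)\,\chi_S\Big(\frac{\gamma}{|t|}\Big)\,dt,\qquad\gamma\in\mathbb{R}.$$ Then: (i) If $f\in L^1(\mathbb{R})$, then $\sum_{j\in\mathbb{Z}} h(c^j\gamma)=\int_{\mathbb{R}}f(t)\,dt$ for all $\gamma\in\mathbb{R}\setminus\{0\}$. (ii) If $f\in C^k(\mathbb{R})$ for some $k\in\mathbb{N}\cup\{0\}$ and $f$ is supported away from the origin (i.e., $f$ vanishes on a neighborhood of $0$), then $h\in C^{k+1}(\mathbb{R})$.
   Context: $\chi_S$ denotes the indicator function of $S$; equivalently $Kf(\gamma)=\int_{-|\gamma|/c}^{-|\gamma|}f(t)\,dt+\int_{|\gamma|}^{|\gamma|/c}f(t)\,dt$. *)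

theory Defs
  imports "HOL-Analysis.Analysis"
begin

definition Sset :: "real \<Rightarrow> real set" where
  "Sset c = {-1..<-c} \<union> {c<..1}"

text \<open>The operator K: (K f)(gamma) = integral over R of f(t) * chi_S(gamma/|t|) dt (Lebesgue).
  At t = 0 the Isabelle convention gamma/0 = 0 is used; this is a null set.\<close>
definition Kop :: "real \<Rightarrow> (real \<Rightarrow> real) \<Rightarrow> real \<Rightarrow> real" where
  "Kop c f \<gamma> = (\<integral>t. f t * indicator (Sset c) (\<gamma> / \<bar>t\<bar>) \<partial>lborel)"

definition Ck :: "nat \<Rightarrow> (real \<Rightarrow> real) \<Rightarrow> bool" where
  "Ck k f \<longleftrightarrow> (\<forall>m<k. \<forall>x. ((deriv ^^ m) f) differentiable (at x))
                 \<and> continuous_on UNIV ((deriv ^^ k) f)"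

end

theory Submission
  imports Defs
begin

text \<open>Since \<open>\<chi>\<^sub>S(\<gamma>/|t|) = 1\<close> exactly when \<open>|\<gamma>| \<le> |t| < |\<gamma>|/c\<close>, \<open>Kf(\<gamma>)\<close> is the
  integral of \<open>f\<close> over that annulus. For (i), the annuli belonging to \<open>c\<^sup>j\<gamma>\<close>, \<open>j \<in> \<int>\<close>,
  partition \<open>\<real> - {0}\<close>, and dominated convergence makes the sum of the integrals over them
  converge unconditionally to the integral over \<open>\<real>\<close>. For (ii), with a primitive \<open>F\<close> of \<open>f\<close>,
  \<open>Kf(\<gamma>) = F(|\<gamma>|/c) - F(|\<gamma>|) + F(-|\<gamma>|) - F(-|\<gamma>|/c)\<close> for \<open>\<gamma> \<noteq> 0\<close>, which is of class
  \<open>C(k+1)\<close> away from \<open>0\<close>; near \<open>0\<close> the annulus lies where \<open>f\<close> vanishes, so \<open>Kf = 0\<close> there.\<close>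

text \<open>Unlike the iterated \<open>deriv\<close> in \<open>Ck\<close>, an explicit family of derivatives is preserved
  by the usual derivative rules, so closure properties of \<open>Ck\<close> go through it.\<close>

definition derivs_upto :: "nat \<Rightarrow> (nat \<Rightarrow> real \<Rightarrow> real) \<Rightarrow> bool" where
  "derivs_upto k D \<longleftrightarrow>
     (\<forall>j<k. \<forall>x. (D j has_real_derivative D (Suc j) x) (at x)) \<and> continuous_on UNIV (D k)"

lemma Ck_iff_derivs_upto: "Ck k u \<longleftrightarrow> (\<exists>D. D 0 = u \<and> derivs_upto k D)"
proof
  assume "Ck k u"
  then have "derivs_upto k (\<lambda>j. (deriv ^^ j) u)"
    by (auto simp: Ck_def derivs_upto_def DERIV_deriv_iff_real_differentiable)
  then show "\<exists>D. D 0 = u \<and> derivs_upto k D" by (metis funpow_0)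
next
  assume "\<exists>D. D 0 = u \<and> derivs_upto k D"
  then obtain D where D0: "D 0 = u" and D: "derivs_upto k D" by blast
  have funpow_deriv: "(deriv ^^ j) u = D j" if "j \<le> k" for j
    using that
  proof (induction j)
    case (Suc j)
    then show ?case
      using D by (auto simp: derivs_upto_def intro!: DERIV_imp_deriv)
  qed (simp add: D0)
  show "Ck k u"
    using D funpow_deriv by (auto simp: Ck_def derivs_upto_def real_differentiable_def)
qed

lemma Ck_imp_continuous_on:
  assumes "Ck k u" shows "continuous_on UNIV u"
proof -
  obtain D where D0: "D 0 = u" and D: "derivs_upto k D"
    using assms Ck_iff_derivs_upto by blast
  show ?thesis
  proof (cases k)
    case 0
    then show ?thesis using D D0 by (simp add: derivs_upto_def)
  next
    case (Suc k')
    then have "(u has_real_derivative D 1 x) (at x)" for x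
      using D D0 by (auto simp: derivs_upto_def)
    then show ?thesis by (auto simp: continuous_on_eq_continuous_at intro: DERIV_isCont)
  qed
qed

lemma Ck_const: "Ck k (\<lambda>x. a)"
  unfolding Ck_iff_derivs_upto derivs_upto_def
  by (rule exI[of _ "\<lambda>j x. if j = 0 then a else 0"]) auto

lemma Ck_add:
  assumes "Ck k u" "Ck k v" shows "Ck k (\<lambda>x. u x + v x)"
proof -
  obtain Du Dv where "Du 0 = u" "derivs_upto k Du" "Dv 0 = v" "derivs_upto k Dv"
    using assms Ck_iff_derivs_upto by metis
  then have "derivs_upto k (\<lambda>j x. Du j x + Dv j x)"
    by (simp add: derivs_upto_def DERIV_add continuous_on_add)
  then show ?thesis
    using \<open>Du 0 = u\<close> \<open>Dv 0 = v\<close> Ck_iff_derivs_upto by fastforce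
qed

lemma Ck_diff:
  assumes "Ck k u" "Ck k v" shows "Ck k (\<lambda>x. u x - v x)"
proof -
  obtain Du Dv where "Du 0 = u" "derivs_upto k Du" "Dv 0 = v" "derivs_upto k Dv"
    using assms Ck_iff_derivs_upto by metis
  then have "derivs_upto k (\<lambda>j x. Du j x - Dv j x)"
    by (simp add: derivs_upto_def DERIV_diff continuous_on_diff)
  then show ?thesis
    using \<open>Du 0 = u\<close> \<open>Dv 0 = v\<close> Ck_iff_derivs_upto by fastforce
qed

lemma Ck_compose_scale:
  assumes "Ck k u" shows "Ck k (\<lambda>x. u (a * x))"
proof -
  obtain D where D0: "D 0 = u" and D: "derivs_upto k D"
    using assms Ck_iff_derivs_upto by blast
  have "derivs_upto k (\<lambda>j x. a ^ j * D j (a * x))"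
    unfolding derivs_upto_def
  proof safe
    fix j x assume "j < k"
    then have "(D j has_real_derivative D (Suc j) (a * x)) (at (a * x))"
      using D by (simp add: derivs_upto_def)
    then have "((\<lambda>x. D j (a * x)) has_real_derivative D (Suc j) (a * x) * a) (at x)"
      by (rule DERIV_chain2) (auto intro!: derivative_eq_intros)
    then have "((\<lambda>x. a ^ j * D j (a * x)) has_real_derivative a ^ j * (D (Suc j) (a * x) * a)) (at x)"
      by (rule DERIV_cmult)
    then show "((\<lambda>x. a ^ j * D j (a * x)) has_real_derivative a ^ Suc j * D (Suc j) (a * x)) (at x)"
      by (simp add: algebra_simps)
  next
    have "continuous_on UNIV (D k)" using D by (simp add: derivs_upto_def)
    then have "continuous_on UNIV (\<lambda>x. D k (a * x))"
      by (rule continuous_on_compose2) (simp_all add: continuous_on_mult_left)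
    then show "continuous_on UNIV (\<lambda>x. a ^ k * D k (a * x))"
      by (rule continuous_on_mult_left)
  qed
  then show ?thesis using D0 Ck_iff_derivs_upto by fastforce
qed

lemma has_real_derivative_primitive:
  fixes f :: "real \<Rightarrow> real" and a :: real
  assumes "continuous_on UNIV f"
  shows "((\<lambda>u. LBINT y=a..u. f y) has_real_derivative f x) (at x)"
proof -
  let ?I = "{min a x - 1..max a x + 1} :: real set"
  have "((\<lambda>u. LBINT y=a..u. f y) has_vector_derivative f x) (at x within ?I)"
    using interval_integral_FTC2[of "min a x - 1" a "max a x + 1" f x]
      continuous_on_subset[OF assms, of ?I]
    by simp
  moreover have "at x within ?I = at x"
    by (rule at_within_Icc_at) auto
  ultimately show ?thesis by (simp add: has_real_derivative_iff_has_vector_derivative)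
qed

lemma Ck_primitive:
  fixes f :: "real \<Rightarrow> real" and a :: real
  assumes "Ck k f"
  shows "Ck (Suc k) (\<lambda>u. LBINT y=a..u. f y)"
proof -
  obtain D where D0: "D 0 = f" and D: "derivs_upto k D"
    using assms Ck_iff_derivs_upto by blast
  let ?P = "\<lambda>u. LBINT y=a..u. f y"
  have "derivs_upto (Suc k) (case_nat ?P D)"
    using D D0 has_real_derivative_primitive[OF Ck_imp_continuous_on[OF assms]]
    by (auto simp: derivs_upto_def less_Suc_eq_0_disj)
  then show ?thesis using Ck_iff_derivs_upto by fastforce
qed

lemma funpow_deriv_cong_open:
  assumes "open U" "\<And>y. y \<in> U \<Longrightarrow> u y = v y" "x \<in> U"
  shows "(deriv ^^ m) u x = (deriv ^^ m) v x"
  using assms(3)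
proof (induction m arbitrary: x)
  case (Suc m)
  have "eventually (\<lambda>y. (deriv ^^ m) u y = (deriv ^^ m) v y) (nhds x)"
    using eventually_nhds_in_open[OF assms(1) Suc.prems] Suc.IH
    by (auto elim: eventually_mono)
  then show ?case using deriv_cong_ev[OF _ refl] by simp
qed (use assms in simp)

lemma Ck_local:
  assumes "\<And>x. \<exists>U v. open U \<and> x \<in> U \<and> Ck k v \<and> (\<forall>y\<in>U. u y = v y)"
  shows "Ck k u"
  unfolding Ck_def
proof safe
  fix m x assume "m < k"
  obtain U v where U: "open U" "x \<in> U" "Ck k v" "\<forall>y\<in>U. u y = v y" using assms by blast
  have same_deriv: "\<And>y. y \<in> U \<Longrightarrow> (deriv ^^ m) v y = (deriv ^^ m) u y"
    using funpow_deriv_cong_open[OF U(1), of u v] U(4) by auto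
  have "(deriv ^^ m) v differentiable at x" using U(3) \<open>m < k\<close> by (simp add: Ck_def)
  then obtain D where "((deriv ^^ m) v has_derivative D) (at x)"
    by (auto simp: differentiable_def)
  then have "((deriv ^^ m) u has_derivative D) (at x)"
    by (rule has_derivative_transform_within_open[OF _ U(1) U(2) same_deriv])
  then show "(deriv ^^ m) u differentiable at x" by (auto simp: differentiable_def)
next
  show "continuous_on UNIV ((deriv ^^ k) u)"
    unfolding continuous_on_eq_continuous_at[OF open_UNIV]
  proof
    fix x :: real
    obtain U v where U: "open U" "x \<in> U" "Ck k v" "\<forall>y\<in>U. u y = v y" using assms by blast
    have "eventually (\<lambda>y. (deriv ^^ k) u y = (deriv ^^ k) v y) (nhds x)"
      using eventually_nhds_in_open[OF U(1) U(2)] funpow_deriv_cong_open[OF U(1), of u v] U(4)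
      by (auto elim: eventually_mono)
    moreover have "isCont ((deriv ^^ k) v) x"
      using U(3) by (simp add: Ck_def continuous_on_eq_continuous_at[OF open_UNIV])
    ultimately show "isCont ((deriv ^^ k) u) x" by (simp add: isCont_cong)
  qed
qed

definition annulus :: "real \<Rightarrow> real \<Rightarrow> real set" where
  "annulus c r = {t. r \<le> \<bar>t\<bar> \<and> \<bar>t\<bar> < r / c}"

lemma indicator_Sset_div_abs:
  assumes "0 < c"
  shows "indicator (Sset c) (\<gamma> / \<bar>t\<bar>) = (indicator (annulus c \<bar>\<gamma>\<bar>) t :: real)"
proof (cases "t = 0")
  case True
  then show ?thesis using assms by (auto simp: Sset_def annulus_def indicator_def)
next
  case False
  then have "0 < c * \<bar>t\<bar>" using assms by simp
  then have "\<gamma> / \<bar>t\<bar> \<in> Sset c \<longleftrightarrow> t \<in> annulus c \<bar>\<gamma>\<bar>"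
    using assms False
    by (cases "0 \<le> \<gamma>"; auto simp: Sset_def annulus_def field_simps;
        use \<open>0 < c * \<bar>t\<bar>\<close> in linarith)
  then show ?thesis by (simp add: indicator_def)
qed

lemma Kop_eq_integral_annulus:
  assumes "0 < c"
  shows "Kop c f \<gamma> = (\<integral>t. f t * indicator (annulus c \<bar>\<gamma>\<bar>) t \<partial>lborel)"
  unfolding Kop_def using indicator_Sset_div_abs[OF assms] by simp

lemma Kop_eq_0_near_0:
  assumes "0 < c" "\<And>t. \<bar>t\<bar> < \<delta> \<Longrightarrow> f t = 0" "\<bar>\<gamma>\<bar> < c * \<delta>"
  shows "Kop c f \<gamma> = 0"
proof -
  have "\<bar>\<gamma>\<bar> / c < \<delta>" using assms by (simp add: field_simps)
  then have "f t * indicator (annulus c \<bar>\<gamma>\<bar>) t = 0" for t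
    using assms(2) by (auto simp: annulus_def indicator_def)
  then have "(\<lambda>t. f t * indicator (annulus c \<bar>\<gamma>\<bar>) t) = (\<lambda>t. 0)" by (rule ext)
  then show ?thesis by (simp add: Kop_eq_integral_annulus[OF assms(1)])
qed

lemma integral_annulus_eq_interval_integrals:
  fixes f :: "real \<Rightarrow> real"
  assumes f: "continuous_on UNIV f" and c: "0 < c" "c < 1" and r: "0 < r"
  shows "(\<integral>t. f t * indicator (annulus c r) t \<partial>lborel)
           = (LBINT t=r..r/c. f t) + (LBINT t=-(r/c)..-r. f t)"
proof -
  have "r < r / c" using c r by (simp add: field_simps)
  have interval_integral_eq: "(LBINT t=a..b. f t) = (\<integral>t. f t * indicator {a<..<b} t \<partial>lborel)"
    and integrable: "integrable lborel (\<lambda>t. f t * indicator {a<..<b} t)"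
    if "a \<le> b" for a b :: real
  proof -
    show "(LBINT t=a..b. f t) = (\<integral>t. f t * indicator {a<..<b} t \<partial>lborel)"
      using that by (simp add: interval_lebesgue_integral_def
          set_lebesgue_integral_def mult.commute)
    have "set_integrable lborel {a..b} f"
      by (rule borel_integrable_atLeastAtMost') (rule continuous_on_subset[OF f], simp)
    then have "set_integrable lborel {a<..<b} f"
      by (rule set_integrable_subset) auto
    then show "integrable lborel (\<lambda>t. f t * indicator {a<..<b} t)"
      by (simp add: set_integrable_def mult.commute)
  qed
  have "(\<integral>t. f t * indicator (annulus c r) t \<partial>lborel)
      = (\<integral>t. f t * indicator {r<..<r/c} t + f t * indicator {-(r/c)<..<-r} t \<partial>lborel)"
    by (rule integral_discrete_difference[where X = "{r, -r}"])
      (use \<open>r < r / c\<close> r in \<open>auto simp: annulus_def indicator_def abs_if\<close>)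
  also have "\<dots> = (LBINT t=r..r/c. f t) + (LBINT t=-(r/c)..-r. f t)"
    using \<open>r < r / c\<close> by (simp add: interval_integral_eq integrable)
  finally show ?thesis .
qed

lemma interval_integral_eq_primitive_diff:
  fixes f :: "real \<Rightarrow> real" and a b x\<^sub>0 :: real
  assumes "continuous_on UNIV f"
  shows "(LBINT t=a..b. f t) = (LBINT t=x\<^sub>0..b. f t) - (LBINT t=x\<^sub>0..a. f t)"
  using continuous_on_subset[OF assms] has_real_derivative_primitive[OF assms]
  by (intro interval_integral_FTC_finite)
    (auto simp: has_real_derivative_iff_has_vector_derivative has_vector_derivative_at_within)

lemma Kop_eq_primitive_diffs:
  fixes f :: "real \<Rightarrow> real"
  assumes f: "continuous_on UNIV f" and c: "0 < c" "c < 1" and "\<gamma> \<noteq> 0"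
  defines "P \<equiv> \<lambda>u. LBINT t=0..u. f t"
  shows "Kop c f \<gamma> = (P (\<bar>\<gamma>\<bar> / c) - P \<bar>\<gamma>\<bar>) + (P (-\<bar>\<gamma>\<bar>) - P (-(\<bar>\<gamma>\<bar> / c)))"
proof -
  have primitive_diff: "(LBINT t=a..b. f t) = P b - P a" for a b :: real
    unfolding P_def using interval_integral_eq_primitive_diff[OF f, of a b 0]
    by (simp add: zero_ereal_def)
  show ?thesis
    using Kop_eq_integral_annulus[OF c(1)] integral_annulus_eq_interval_integrals[OF f c]
      \<open>\<gamma> \<noteq> 0\<close> by (simp add: primitive_diff)
qed

lemma Ck_Kop:
  fixes f :: "real \<Rightarrow> real"
  assumes c: "0 < c" "c < 1" and f: "Ck k f"
    and \<delta>: "0 < \<delta>" "\<And>t. \<bar>t\<bar> < \<delta> \<Longrightarrow> f t = 0"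
  shows "Ck (Suc k) (Kop c f)"
proof -
  define P where "P = (\<lambda>u. LBINT t=0..u. f t)"
  define G where "G = (\<lambda>r. (P ((1/c) * r) - P r) + (P ((-1) * r) - P ((-1/c) * r)))"
  have "Ck (Suc k) P" unfolding P_def using Ck_primitive[OF f, of 0] by (simp add: zero_ereal_def)
  then have G: "Ck (Suc k) G"
    unfolding G_def by (intro Ck_add Ck_diff Ck_compose_scale)
  have Kop_eq_G: "Kop c f \<gamma> = G \<bar>\<gamma>\<bar>" if "\<gamma> \<noteq> 0" for \<gamma>
    using Kop_eq_primitive_diffs[OF Ck_imp_continuous_on[OF f] c that]
    unfolding G_def P_def by simp
  show ?thesis
  proof (rule Ck_local)
    fix x :: real
    consider "0 < x" | "x < 0" | "x = 0" by linarith
    then show "\<exists>U v. open U \<and> x \<in> U \<and> Ck (Suc k) v \<and> (\<forall>y\<in>U. Kop c f y = v y)"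
    proof cases
      case 1
      then show ?thesis
        using G Kop_eq_G by (intro exI[of _ "{0<..}"] exI[of _ G]) auto
    next
      case 2
      then show ?thesis
        using Ck_compose_scale[OF G, of "-1"] Kop_eq_G
        by (intro exI[of _ "{..<0}"] exI[of _ "\<lambda>y. G (-1 * y)"]) auto
    next
      case 3
      have "0 < c * \<delta>" using c \<delta> by simp
      moreover have "Kop c f y = 0" if "y \<in> {-(c * \<delta>)<..<c * \<delta>}" for y
        using Kop_eq_0_near_0[OF c(1) \<delta>(2)] that by (auto simp: abs_less_iff)
      ultimately show ?thesis
        using 3 Ck_const by (intro exI[of _ "{-(c * \<delta>)<..<c * \<delta>}"] exI[of _ "\<lambda>y. 0"]) auto
    qed
  qed
qed

lemma powi_bracket:
  fixes c s :: real
  assumes "0 < c" "c < 1" "0 < s"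
  shows "\<exists>j::int. c powi j \<le> s \<and> s < c powi (j - 1)"
proof -
  define j where "j = \<lceil>log c s\<rceil>"
  have powr_log: "c powr log c s = s" using assms by simp
  have powr_of_int: "c powr real_of_int i = c powi i" for i
    using assms by (simp add: powr_real_of_int')
  have "c powr real_of_int j \<le> c powr log c s"
    using assms by (intro powr_mono') (auto simp: j_def)
  moreover have "c powr log c s < c powr real_of_int (j - 1)"
    using assms ceiling_correct[of "log c s"] by (intro powr_less_mono') (auto simp: j_def)
  ultimately show ?thesis
    by (simp only: powr_log powr_of_int) blast
qed

lemma integral_abs_outside_tendsto_0:
  fixes f :: "'a \<Rightarrow> real"
  assumes f: "integrable M f" and W: "\<And>n. W n \<in> sets M"
    and exhaust: "AE x in M. eventually (\<lambda>n. x \<in> W n) sequentially"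
  shows "(\<lambda>n. \<integral>x. \<bar>f x\<bar> * indicator (space M - W n) x \<partial>M) \<longlonglongrightarrow> 0"
proof -
  have "(\<lambda>n. \<integral>x. \<bar>f x\<bar> * indicator (space M - W n) x \<partial>M) \<longlonglongrightarrow> (\<integral>x. 0 \<partial>M)"
  proof (rule integral_dominated_convergence[where w = "\<lambda>x. \<bar>f x\<bar>"])
    show "AE x in M. (\<lambda>n. \<bar>f x\<bar> * indicator (space M - W n) x) \<longlonglongrightarrow> 0"
      using exhaust
    proof eventually_elim
      case (elim x)
      then have "eventually (\<lambda>n. \<bar>f x\<bar> * indicator (space M - W n) x = 0) sequentially"
        by eventually_elim simp
      then show ?case by (rule tendsto_eventually)
    qed
  qed (use f W in \<open>auto simp: indicator_def\<close>)
  then show ?thesis by simp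
qed

lemma has_sum_integral_disjoint_family:
  fixes f :: "'a \<Rightarrow> real" and A :: "'i::countable \<Rightarrow> 'a set"
  assumes f: "integrable M f" and A: "\<And>j. A j \<in> sets M"
    and disj: "disjoint_family A" and cover: "AE x in M. \<exists>j. x \<in> A j"
  shows "((\<lambda>j. \<integral>x. f x * indicator (A j) x \<partial>M) has_sum (\<integral>x. f x \<partial>M)) UNIV"
proof -
  define W where "W n = (\<Union>m\<le>n. A (from_nat m))" for n
  have W: "W n \<in> sets M" for n
    unfolding W_def using A by auto
  have partial_sum: "(\<Sum>j\<in>F. \<integral>x. f x * indicator (A j) x \<partial>M)
      = (\<integral>x. f x * indicator (\<Union>(A ` F)) x \<partial>M)" if "finite F" for F
  proof -
    have "(\<Sum>j\<in>F. \<integral>x. f x * indicator (A j) x \<partial>M) = (\<integral>x. (\<Sum>j\<in>F. f x * indicator (A j) x) \<partial>M)"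
      using integrable_real_mult_indicator[OF A f] by (simp add: Bochner_Integration.integral_sum)
    also have "\<dots> = (\<integral>x. f x * indicator (\<Union>(A ` F)) x \<partial>M)"
    proof (rule Bochner_Integration.integral_cong[OF refl])
      fix x
      have "disjoint_family_on A F" by (rule disjoint_family_on_mono[OF subset_UNIV disj])
      then have "indicator (\<Union>(A ` F)) x = (\<Sum>j\<in>F. indicator (A j) x :: real)"
        by (rule indicator_UN_disjoint[OF \<open>finite F\<close>])
      then show "(\<Sum>j\<in>F. f x * indicator (A j) x) = f x * indicator (\<Union>(A ` F)) x"
        by (simp add: sum_distrib_left)
    qed
    finally show ?thesis .
  qed
  have "AE x in M. eventually (\<lambda>n. x \<in> W n) sequentially"
    using cover
  proof eventually_elim
    case (elim x)
    then obtain j where "x \<in> A j" by blast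
    then have "x \<in> W n" if "to_nat j \<le> n" for n
      using that unfolding W_def by (intro UN_I[of "to_nat j"]) simp_all
    then show ?case unfolding eventually_sequentially by blast
  qed
  then have tail: "(\<lambda>n. \<integral>x. \<bar>f x\<bar> * indicator (space M - W n) x \<partial>M) \<longlonglongrightarrow> 0"
    by (rule integral_abs_outside_tendsto_0[OF f W])
  show ?thesis
    unfolding has_sum_def
  proof (rule tendstoI)
    fix e :: real assume "0 < e"
    then obtain n where n: "(\<integral>x. \<bar>f x\<bar> * indicator (space M - W n) x \<partial>M) < e"
      using order_tendstoD(2)[OF tail] by (auto simp: eventually_sequentially)
    have "dist (\<Sum>j\<in>F. \<integral>x. f x * indicator (A j) x \<partial>M) (\<integral>x. f x \<partial>M) < e"
      if F: "finite F" "from_nat ` {..n} \<subseteq> F" for F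
    proof -
      have "\<Union>(A ` F) \<in> sets M" using A F by auto
      then have int_U: "integrable M (\<lambda>x. f x * indicator (\<Union>(A ` F)) x)"
        by (rule integrable_real_mult_indicator[OF _ f])
      have "space M - W n \<in> sets M" using W by blast
      then have int_tail: "integrable M (\<lambda>x. \<bar>f x\<bar> * indicator (space M - W n) x)"
        by (rule integrable_real_mult_indicator[OF _ integrable_abs[OF f]])
      have "dist (\<Sum>j\<in>F. \<integral>x. f x * indicator (A j) x \<partial>M) (\<integral>x. f x \<partial>M)
          = \<bar>\<integral>x. f x - f x * indicator (\<Union>(A ` F)) x \<partial>M\<bar>"
        using partial_sum[OF F(1)] Bochner_Integration.integral_diff[OF f int_U]
        by (simp add: dist_real_def abs_minus_commute)
      also have "\<dots> \<le> (\<integral>x. \<bar>f x - f x * indicator (\<Union>(A ` F)) x\<bar> \<partial>M)"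
        by (rule integral_abs_bound)
      also have "\<dots> \<le> (\<integral>x. \<bar>f x\<bar> * indicator (space M - W n) x \<partial>M)"
      proof (rule integral_mono)
        show "integrable M (\<lambda>x. \<bar>f x - f x * indicator (\<Union>(A ` F)) x\<bar>)"
          using f int_U by auto
        have "W n \<subseteq> \<Union>(A ` F)" using F unfolding W_def by blast
        then show "\<bar>f x - f x * indicator (\<Union>(A ` F)) x\<bar> \<le> \<bar>f x\<bar> * indicator (space M - W n) x"
          if "x \<in> space M" for x
          using that by (auto simp: indicator_def)
      qed (rule int_tail)
      also have "\<dots> < e" by (rule n)
      finally show ?thesis .
    qed
    then show "\<forall>\<^sub>F F in finite_subsets_at_top UNIV.
        dist (\<Sum>j\<in>F. \<integral>x. f x * indicator (A j) x \<partial>M) (\<integral>x. f x \<partial>M) < e"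
      unfolding eventually_finite_subsets_at_top by (intro exI[of _ "from_nat ` {..n}"]) blast
  qed
qed

lemma Kop_powi_has_sum_integral:
  fixes f :: "real \<Rightarrow> real"
  assumes c: "0 < c" "c < 1" and f: "integrable lborel f" and "\<gamma> \<noteq> 0"
  shows "((\<lambda>j::int. Kop c f (c powi j * \<gamma>)) has_sum (\<integral>t. f t \<partial>lborel)) UNIV"
proof -
  define A where "A j = annulus c (c powi j * \<bar>\<gamma>\<bar>)" for j :: int
  have Kop_eq: "Kop c f (c powi j * \<gamma>) = (\<integral>t. f t * indicator (A j) t \<partial>lborel)" for j
    using Kop_eq_integral_annulus[OF c(1)] c by (simp add: A_def abs_mult)
  have A_eq: "A j = {t. c powi j * \<bar>\<gamma>\<bar> \<le> \<bar>t\<bar> \<and> \<bar>t\<bar> < c powi (j - 1) * \<bar>\<gamma>\<bar>}" for j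
    using c by (simp add: A_def annulus_def power_int_diff)
  have "disjoint_family A"
  unfolding disjoint_family_on_def
  proof (intro ballI impI)
    have "A i \<inter> A j = {}" if "i < j" for i j
    proof -
      have "c powi (j - 1) * \<bar>\<gamma>\<bar> \<le> c powi i * \<bar>\<gamma>\<bar>"
        using c that by (intro mult_right_mono power_int_decreasing) auto
      then show ?thesis by (auto simp: A_eq)
    qed
    then show "A i \<inter> A j = {}" if "i \<noteq> j" for i j
      using that by (metis Int_commute linorder_neqE)
  qed
  moreover have cover: "\<exists>j. t \<in> A j" if t: "t \<noteq> 0" for t
  proof -
    obtain j where "c powi j \<le> \<bar>t\<bar> / \<bar>\<gamma>\<bar>" "\<bar>t\<bar> / \<bar>\<gamma>\<bar> < c powi (j - 1)"
      using powi_bracket[OF c, of "\<bar>t\<bar> / \<bar>\<gamma>\<bar>"] t \<open>\<gamma> \<noteq> 0\<close> by auto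
    then show ?thesis
      using \<open>\<gamma> \<noteq> 0\<close> by (auto simp: A_eq field_simps)
  qed
  have "AE t in lborel. t \<noteq> 0" by (rule AE_lborel_singleton)
  then have "AE t in lborel. \<exists>j. t \<in> A j" by eventually_elim (rule cover)
  moreover have "A j \<in> sets lborel" for j
    unfolding A_def annulus_def by measurable
  ultimately show ?thesis
    unfolding Kop_eq by (intro has_sum_integral_disjoint_family[OF f])
qed


theorem proposition3p3:
  fixes c :: real and f :: "real \<Rightarrow> real"
  assumes "0 < c" and "c < 1"
  shows "(integrable lborel f \<longrightarrow>
            (\<forall>\<gamma>. \<gamma> \<noteq> 0 \<longrightarrow>
               ((\<lambda>j::int. Kop c f (c powi j * \<gamma>)) has_sum (\<integral>t. f t \<partial>lborel)) UNIV))
       \<and> (\<forall>k::nat. Ck k f \<and> (\<exists>\<delta>>0. \<forall>t. \<bar>t\<bar> < \<delta> \<longrightarrow> f t = 0)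
               \<longrightarrow> Ck (Suc k) (Kop c f))"
  using Kop_powi_has_sum_integral[OF assms] Ck_Kop[OF assms] by blast

end
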